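(* Let $T$ be a tournament of order $n \geq 3$. Then $\mathrm{sinv}_1(T) = \mathrm{sinv}'_1(T) = 0$ if $T$ is strong and $\mathrm{sinv}_1(T) = \mathrm{sinv}'_1(T) = 1$ otherwise. In particular, $m_1(n) = m'_1(n) = 1$ for all $n \geq 3$ and $M_1 = M'_1 = 1$.
   Context: A tournament is an orientation of a complete graph; it is strong if for every ordered pair of vertices $(u,v)$ there is a directed path from $u$ to $v$. For a digraph $D$ and $X \subseteq V(D)$, inverting $X$ means reversing the direction of every arc of $D$ with both endvertices in $X$. A digraph $D$ is $k$-arc-strong if for every partition $(V_1,V_2)$ of $V(D)$ into nonempty sets there are at least $k$ arcs from $V_1$ to $V_2$; it is $k$-strong if $|V(D)|\ge k+1$ and $D-S$ is strong for every $S\subseteq V(D)$ with $|S|<k$. $\mathrm{sinv}'_k(D)$ (resp. $\mathrm{sinv}_k(D)$) is the minimum number of sets whose successive inversion transforms $D$ into a $k$-arc-strong (resp. $k$-strong) digraph. For $n\ge 2k+1$, $m_k(n)=\max\{\mathrm{sinv}_k(T): T \text{ tournament of order } n\}$, $m'_k(n)=\max\{\mathrm{sinv}'_k(T): T \text{ tournament of order } n\}$, $M_k=\max\{\mathrm{sinv}_k(T): T \text{ tournament of order at least } 2k+1\}$, $M'_k=\max\{\mathrm{sinv}'_k(T): T \text{ tournament of order at least } 2k+1\}$. *)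

theory Defs
  imports Main "HOL-Library.Extended_Nat"
begin

definition tournament :: "'a set \<Rightarrow> ('a \<times> 'a) set \<Rightarrow> bool" where
  "tournament V A \<longleftrightarrow> finite V \<and> A \<subseteq> V \<times> V \<and> (\<forall>v. (v, v) \<notin> A) \<and>
     (\<forall>u\<in>V. \<forall>v\<in>V. u \<noteq> v \<longrightarrow> ((u, v) \<in> A \<longleftrightarrow> (v, u) \<notin> A))"

definition invert :: "('a \<times> 'a) set \<Rightarrow> 'a set \<Rightarrow> ('a \<times> 'a) set" where
  "invert A X = {(u, v). (u, v) \<in> A \<and> \<not> (u \<in> X \<and> v \<in> X)}
               \<union> {(u, v). (v, u) \<in> A \<and> u \<in> X \<and> v \<in> X}"

definition invert_seq :: "('a \<times> 'a) set \<Rightarrow> 'a set list \<Rightarrow> ('a \<times> 'a) set" where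
  "invert_seq A Xs = foldl invert A Xs"

definition strong :: "'a set \<Rightarrow> ('a \<times> 'a) set \<Rightarrow> bool" where
  "strong V A \<longleftrightarrow> (\<forall>u\<in>V. \<forall>v\<in>V. (u, v) \<in> (A \<inter> V \<times> V)\<^sup>*)"

definition arc_strong :: "nat \<Rightarrow> 'a set \<Rightarrow> ('a \<times> 'a) set \<Rightarrow> bool" where
  "arc_strong k V A \<longleftrightarrow> (\<forall>V1 V2. V1 \<noteq> {} \<and> V2 \<noteq> {} \<and> V1 \<inter> V2 = {} \<and> V1 \<union> V2 = V \<longrightarrow>
      card {(u, v) \<in> A. u \<in> V1 \<and> v \<in> V2} \<ge> k)"

definition k_strong :: "nat \<Rightarrow> 'a set \<Rightarrow> ('a \<times> 'a) set \<Rightarrow> bool" where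
  "k_strong k V A \<longleftrightarrow> card V \<ge> k + 1 \<and>
      (\<forall>S. S \<subseteq> V \<and> card S < k \<longrightarrow> strong (V - S) (A \<inter> (V - S) \<times> (V - S)))"

definition sinv :: "nat \<Rightarrow> 'a set \<Rightarrow> ('a \<times> 'a) set \<Rightarrow> nat" where
  "sinv k V A = (LEAST p. \<exists>Xs. length Xs = p \<and> set Xs \<subseteq> Pow V \<and> k_strong k V (invert_seq A Xs))"

definition sinv' :: "nat \<Rightarrow> 'a set \<Rightarrow> ('a \<times> 'a) set \<Rightarrow> nat" where
  "sinv' k V A = (LEAST p. \<exists>Xs. length Xs = p \<and> set Xs \<subseteq> Pow V \<and> arc_strong k V (invert_seq A Xs))"

text \<open>Maxima over tournaments of order n (up to isomorphism it suffices to take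
  vertex set {0..<n}).\<close>
definition m_k :: "nat \<Rightarrow> nat \<Rightarrow> nat" where
  "m_k k n = Max {sinv k {0..<n} A | A. tournament {0..<n} A}"

definition m'_k :: "nat \<Rightarrow> nat \<Rightarrow> nat" where
  "m'_k k n = Max {sinv' k {0..<n} A | A. tournament {0..<n} A}"

definition M_k :: "nat \<Rightarrow> enat" where
  "M_k k = (SUP n\<in>{n. n \<ge> 2 * k + 1}. enat (m_k k n))"

definition M'_k :: "nat \<Rightarrow> enat" where
  "M'_k k = (SUP n\<in>{n. n \<ge> 2 * k + 1}. enat (m'_k k n))"

end

theory Submission
  imports Defs
begin

text \<open>A non-strong tournament has a vertex u from which every vertex is reachable and a
  vertex w reachable from every vertex, with w not reaching u; hence the arc between them
  is u \<rightarrow> w. Choosing u and w extremal (w with the smallest set of vertices it reaches, u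
  dually), every vertex other than u reaches w without passing through u, and u reaches every
  vertex other than w without passing through w. Inverting {u, w} reverses only the arc
  u \<rightarrow> w, so these paths survive, and together with the new arc w \<rightarrow> u and a path
  u \<rightarrow> x \<rightarrow> w through a third vertex x they make u a hub of the new tournament.
  For digraphs on at least two vertices, being 1-strong and being 1-arc-strong both mean
  being strong, and transitive tournaments are not strong, so all the maxima equal 1.\<close>

lemma tournament_converse: "tournament V A \<Longrightarrow> tournament V (A\<inverse>)"
  unfolding tournament_def by blast

lemma tournament_arc_if_not_reachable:
  assumes "tournament V A" "u \<in> V" "v \<in> V" "(v, u) \<notin> A\<^sup>*"
  shows "(u, v) \<in> A"
  using assms unfolding tournament_def by (metis r_into_rtrancl rtrancl.rtrancl_refl)

lemma rtrancl_closed_restrict: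
  assumes "(x, y) \<in> r\<^sup>*" "x \<in> S" "r `` S \<subseteq> S"
  shows "(x, y) \<in> (r \<inter> S \<times> S)\<^sup>*"
  using assms(1)
proof (induction rule: rtrancl_induct)
  case (step y z)
  have "y \<in> S" using step.hyps(1) assms(2) Image_closed_trancl[OF assms(3)] by blast
  with step assms(3) show ?case by (blast intro: rtrancl_into_rtrancl)
qed simp

lemma strong_iff_reachable:
  assumes "A \<subseteq> V \<times> V"
  shows "strong V A \<longleftrightarrow> (\<forall>u\<in>V. \<forall>v\<in>V. (u, v) \<in> A\<^sup>*)"
  using assms unfolding strong_def by (simp add: Int_absorb2)

lemma strong_if_hub:
  assumes "A \<subseteq> V \<times> V"
    and "\<And>v. v \<in> V \<Longrightarrow> (v, c) \<in> A\<^sup>*" and "\<And>v. v \<in> V \<Longrightarrow> (c, v) \<in> A\<^sup>*"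
  shows "strong V A"
  unfolding strong_iff_reachable[OF assms(1)] using assms(2,3) by (blast intro: rtrancl_trans)

lemma invert_doubleton:
  assumes "(u, w) \<in> A" "(w, u) \<notin> A" "(u, u) \<notin> A" "(w, w) \<notin> A"
  shows "invert A {u, w} = insert (w, u) (A - {(u, w)})"
  using assms unfolding invert_def by auto

lemma invert_subset_Times: "A \<subseteq> V \<times> V \<Longrightarrow> invert A X \<subseteq> V \<times> V"
  unfolding invert_def by blast

lemma arc_strong_1_iff:
  assumes "finite A"
  shows "arc_strong 1 V A \<longleftrightarrow> (\<forall>V1 V2. V1 \<noteq> {} \<and> V2 \<noteq> {} \<and> V1 \<inter> V2 = {} \<and> V1 \<union> V2 = V
           \<longrightarrow> (\<exists>(u, v)\<in>A. u \<in> V1 \<and> v \<in> V2))"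
proof -
  have "1 \<le> card {(u, v) \<in> A. u \<in> V1 \<and> v \<in> V2} \<longleftrightarrow> (\<exists>(u, v)\<in>A. u \<in> V1 \<and> v \<in> V2)"
    for V1 V2
  proof -
    have "finite {(u, v) \<in> A. u \<in> V1 \<and> v \<in> V2}"
      using assms by (rule finite_subset[rotated]) auto
    then show ?thesis by (auto simp: Suc_le_eq card_gt_0_iff)
  qed
  then show ?thesis unfolding arc_strong_def by (simp only:)
qed

lemma k_strong_1_iff:
  assumes "finite V"
  shows "k_strong 1 V A \<longleftrightarrow> 2 \<le> card V \<and> strong V A"
proof -
  have "S \<subseteq> V \<and> card S < 1 \<longleftrightarrow> S = {}" for S :: "'a set"
    using assms by (auto simp: finite_subset)
  then show ?thesis unfolding k_strong_def strong_def by (simp add: Int_assoc numeral_2_eq_2)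
qed

lemma strong_iff_arc_strong_1:
  assumes fin: "finite V" and AV: "A \<subseteq> V \<times> V"
  shows "arc_strong 1 V A \<longleftrightarrow> strong V A"
proof -
  have "finite A" using fin AV by (meson finite_SigmaI finite_subset)
  note arc_strong_iff = arc_strong_1_iff[OF this]
  show ?thesis
  proof
    assume arcs: "arc_strong 1 V A"
    have "(a, b) \<in> A\<^sup>*" if "a \<in> V" "b \<in> V" for a b
    proof (rule ccontr)
      assume "(a, b) \<notin> A\<^sup>*"
      define R where "R = A\<^sup>* `` {a}"
      have "R \<subseteq> V" "A `` R \<subseteq> R"
        unfolding R_def using AV \<open>a \<in> V\<close> Image_closed_trancl[of A V]
        by (auto intro: rtrancl_into_rtrancl)
      moreover have "a \<in> R" "b \<in> V - R" unfolding R_def using that \<open>(a, b) \<notin> A\<^sup>*\<close> by auto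
      ultimately have "R \<noteq> {} \<and> V - R \<noteq> {} \<and> R \<inter> (V - R) = {} \<and> R \<union> (V - R) = V" by blast
      then have "\<exists>(x, y)\<in>A. x \<in> R \<and> y \<in> V - R"
        by (rule arcs[unfolded arc_strong_iff, rule_format])
      then show False using \<open>A `` R \<subseteq> R\<close> by blast
    qed
    then show "strong V A" using strong_iff_reachable[OF AV] by blast
  next
    assume "strong V A"
    show "arc_strong 1 V A" unfolding arc_strong_iff
    proof (intro allI impI)
      fix V1 V2 assume part: "V1 \<noteq> {} \<and> V2 \<noteq> {} \<and> V1 \<inter> V2 = {} \<and> V1 \<union> V2 = V"
      then obtain a b where "a \<in> V1" "b \<in> V2" by blast
      then have "(a, b) \<in> A\<^sup>*" using \<open>strong V A\<close> part strong_iff_reachable[OF AV] by blast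
      moreover have "b \<notin> A\<^sup>* `` V1" if "A `` V1 \<subseteq> V1"
        using that Image_closed_trancl[of A V1] \<open>b \<in> V2\<close> part by blast
      ultimately have "\<not> A `` V1 \<subseteq> V1" using \<open>a \<in> V1\<close> by blast
      then show "\<exists>(u, v)\<in>A. u \<in> V1 \<and> v \<in> V2" using AV part by blast
    qed
  qed
qed

lemma terminal_component_vertex:
  assumes fin: "finite V" and AV: "A \<subseteq> V \<times> V" and "V \<noteq> {}"
  obtains w where "w \<in> V"
    and "\<And>v. (w, v) \<in> A\<^sup>* \<Longrightarrow> (v, w) \<in> (A \<inter> A\<^sup>* `` {w} \<times> A\<^sup>* `` {w})\<^sup>*"
proof -
  define R where "R x = A\<^sup>* `` {x}" for x
  have R_closed: "A `` R x \<subseteq> R x" for x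
    unfolding R_def by (auto intro: rtrancl_into_rtrancl)
  have R_sub: "R x \<subseteq> V" if "x \<in> V" for x
    unfolding R_def using that Image_closed_trancl[of A V] AV by blast
  obtain w where "w \<in> V" and w_min: "\<And>y. y \<in> V \<Longrightarrow> card (R w) \<le> card (R y)"
    using ex_has_least_nat[of "\<lambda>x. x \<in> V" _ "\<lambda>x. card (R x)"] \<open>V \<noteq> {}\<close> by blast
  have "(v, w) \<in> (A \<inter> R w \<times> R w)\<^sup>*" if "(w, v) \<in> A\<^sup>*" for v
  proof -
    have "v \<in> R w" unfolding R_def using that by simp
    then have "v \<in> V" using R_sub[OF \<open>w \<in> V\<close>] by blast
    have "finite (R w)" using R_sub[OF \<open>w \<in> V\<close>] fin by (rule finite_subset)
    moreover have "R v \<subseteq> R w" unfolding R_def using that by (auto intro: rtrancl_trans)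
    moreover have "card (R w) \<le> card (R v)" using w_min[OF \<open>v \<in> V\<close>] .
    ultimately have "R v = R w" by (rule card_seteq)
    then have "(v, w) \<in> A\<^sup>*" unfolding R_def by blast
    then show ?thesis using \<open>v \<in> R w\<close> R_closed by (rule rtrancl_closed_restrict)
  qed
  then show thesis using that \<open>w \<in> V\<close> unfolding R_def by blast
qed

lemma tournament_terminal_vertex:
  assumes T: "tournament V A" and "V \<noteq> {}"
  obtains w where "w \<in> V" and "\<And>v. v \<in> V \<Longrightarrow> (v, w) \<in> A\<^sup>*"
    and "\<And>u v. (w, u) \<notin> A\<^sup>* \<Longrightarrow> v \<in> V - {u} \<Longrightarrow> (v, w) \<in> (A \<inter> (V - {u}) \<times> (V - {u}))\<^sup>*"
proof -
  have fin: "finite V" and AV: "A \<subseteq> V \<times> V" using T unfolding tournament_def by auto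
  define R where "R w = A\<^sup>* `` {w}" for w
  obtain w where "w \<in> V" and reaches_w: "\<And>v. (w, v) \<in> A\<^sup>* \<Longrightarrow> (v, w) \<in> (A \<inter> R w \<times> R w)\<^sup>*"
    using terminal_component_vertex[OF fin AV \<open>V \<noteq> {}\<close>] unfolding R_def by blast
  have "w \<in> R w" unfolding R_def by simp
  have "R w \<subseteq> V" unfolding R_def using \<open>w \<in> V\<close> Image_closed_trancl[of A V] AV by blast
  have arc_to_w: "(v, w) \<in> A" if "v \<in> V" and "(w, v) \<notin> A\<^sup>*" for v
    using T that(1) \<open>w \<in> V\<close> that(2) by (rule tournament_arc_if_not_reachable)
  show thesis
  proof (rule that)
    show "w \<in> V" by fact
  next
    fix v assume "v \<in> V"
    show "(v, w) \<in> A\<^sup>*"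
    proof (cases "(w, v) \<in> A\<^sup>*")
      case True
      then show ?thesis using reaches_w rtrancl_mono[of "A \<inter> R w \<times> R w" A] by blast
    next
      case False
      then show ?thesis using arc_to_w[OF \<open>v \<in> V\<close>] by blast
    qed
  next
    fix u v assume "(w, u) \<notin> A\<^sup>*" and "v \<in> V - {u}"
    then have "u \<notin> R w" unfolding R_def by simp
    show "(v, w) \<in> (A \<inter> (V - {u}) \<times> (V - {u}))\<^sup>*"
    proof (cases "(w, v) \<in> A\<^sup>*")
      case True
      have "A \<inter> R w \<times> R w \<subseteq> A \<inter> (V - {u}) \<times> (V - {u})"
        using \<open>R w \<subseteq> V\<close> \<open>u \<notin> R w\<close> by blast
      then show ?thesis using reaches_w[OF True] rtrancl_mono by blast
    next
      case False
      then have "(v, w) \<in> A \<inter> (V - {u}) \<times> (V - {u})"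
        using arc_to_w \<open>v \<in> V - {u}\<close> \<open>w \<in> V\<close> \<open>w \<in> R w\<close> \<open>u \<notin> R w\<close> by blast
      then show ?thesis by blast
    qed
  qed
qed

lemma tournament_initial_vertex:
  assumes T: "tournament V A" and "V \<noteq> {}"
  obtains u where "u \<in> V" and "\<And>v. v \<in> V \<Longrightarrow> (u, v) \<in> A\<^sup>*"
    and "\<And>w v. (w, u) \<notin> A\<^sup>* \<Longrightarrow> v \<in> V - {w} \<Longrightarrow> (u, v) \<in> (A \<inter> (V - {w}) \<times> (V - {w}))\<^sup>*"
proof -
  have converse_Restr: "A\<inverse> \<inter> S \<times> S = (A \<inter> S \<times> S)\<inverse>" for S by blast
  show thesis
  proof (rule tournament_terminal_vertex[OF tournament_converse[OF T] \<open>V \<noteq> {}\<close>])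
    fix u assume "u \<in> V" and to_u: "\<And>v. v \<in> V \<Longrightarrow> (v, u) \<in> (A\<inverse>)\<^sup>*"
      and to_u_avoiding: "\<And>w v. (u, w) \<notin> (A\<inverse>)\<^sup>* \<Longrightarrow> v \<in> V - {w} \<Longrightarrow>
        (v, u) \<in> (A\<inverse> \<inter> (V - {w}) \<times> (V - {w}))\<^sup>*"
    show thesis
    proof (rule that[OF \<open>u \<in> V\<close>])
      show "(u, v) \<in> A\<^sup>*" if "v \<in> V" for v
        using to_u[OF that] by (simp add: rtrancl_converse)
      show "(u, v) \<in> (A \<inter> (V - {w}) \<times> (V - {w}))\<^sup>*" if "(w, u) \<notin> A\<^sup>*" and "v \<in> V - {w}" for w v
        using to_u_avoiding[of w v] that by (simp add: converse_Restr rtrancl_converse)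
    qed
  qed
qed

lemma strong_after_reversing_arc:
  assumes AV: "A \<subseteq> V \<times> V" and "u \<in> V" and "w \<in> V" and "3 \<le> card V"
    and to_w: "\<And>v. v \<in> V - {u} \<Longrightarrow> (v, w) \<in> (A \<inter> (V - {u}) \<times> (V - {u}))\<^sup>*"
    and from_u: "\<And>v. v \<in> V - {w} \<Longrightarrow> (u, v) \<in> (A \<inter> (V - {w}) \<times> (V - {w}))\<^sup>*"
  shows "strong V (insert (w, u) (A - {(u, w)}))"
proof -
  define B where "B = insert (w, u) (A - {(u, w)})"
  have "A \<inter> (V - {u}) \<times> (V - {u}) \<subseteq> B" and "A \<inter> (V - {w}) \<times> (V - {w}) \<subseteq> B"
    unfolding B_def by auto
  note B_reaches = this[THEN rtrancl_mono]
  have to_w_in_B: "(v, w) \<in> B\<^sup>*" if "v \<in> V - {u}" for v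
    using B_reaches(1) to_w[OF that] by blast
  have from_u_in_B: "(u, v) \<in> B\<^sup>*" if "v \<in> V - {w}" for v
    using B_reaches(2) from_u[OF that] by blast
  obtain x where "x \<in> V - {u, w}"
  proof -
    have "\<not> V \<subseteq> {u, w}"
    proof
      assume "V \<subseteq> {u, w}"
      then have "card V \<le> card {u, w}" by (rule card_mono[rotated]) simp
      also have "\<dots> \<le> 2" by (simp add: card_insert_if)
      finally show False using \<open>3 \<le> card V\<close> by simp
    qed
    then show thesis using that by blast
  qed
  then have "(u, w) \<in> B\<^sup>*" using from_u_in_B to_w_in_B by (blast intro: rtrancl_trans)
  have "(w, u) \<in> B" unfolding B_def by simp
  have "B \<subseteq> V \<times> V" unfolding B_def using AV \<open>u \<in> V\<close> \<open>w \<in> V\<close> by auto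
  moreover have "(v, u) \<in> B\<^sup>*" if "v \<in> V" for v
  proof (cases "v = u")
    case False
    then show ?thesis using to_w_in_B \<open>v \<in> V\<close> \<open>(w, u) \<in> B\<close> by (blast intro: rtrancl_into_rtrancl)
  qed simp
  moreover have "(u, v) \<in> B\<^sup>*" if "v \<in> V" for v
    using from_u_in_B \<open>(u, w) \<in> B\<^sup>*\<close> that by (cases "v = w") auto
  ultimately show ?thesis unfolding B_def by (rule strong_if_hub)
qed

lemma tournament_strong_after_inverting_pair:
  assumes T: "tournament V A" and "3 \<le> card V" and "\<not> strong V A"
  obtains u w where "u \<in> V" and "w \<in> V" and "strong V (invert A {u, w})"
proof -
  have AV: "A \<subseteq> V \<times> V" and loopless: "\<And>v. (v, v) \<notin> A"
    using T unfolding tournament_def by auto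
  have "V \<noteq> {}" using \<open>3 \<le> card V\<close> by auto
  obtain u where "u \<in> V" and from_u: "\<And>v. v \<in> V \<Longrightarrow> (u, v) \<in> A\<^sup>*"
    and from_u_avoiding: "\<And>w v. (w, u) \<notin> A\<^sup>* \<Longrightarrow> v \<in> V - {w} \<Longrightarrow>
      (u, v) \<in> (A \<inter> (V - {w}) \<times> (V - {w}))\<^sup>*"
    using tournament_initial_vertex[OF T \<open>V \<noteq> {}\<close>] by blast
  obtain w where "w \<in> V" and to_w: "\<And>v. v \<in> V \<Longrightarrow> (v, w) \<in> A\<^sup>*"
    and to_w_avoiding: "\<And>u v. (w, u) \<notin> A\<^sup>* \<Longrightarrow> v \<in> V - {u} \<Longrightarrow>
      (v, w) \<in> (A \<inter> (V - {u}) \<times> (V - {u}))\<^sup>*"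
    using tournament_terminal_vertex[OF T \<open>V \<noteq> {}\<close>] by blast
  have "(w, u) \<notin> A\<^sup>*"
  proof
    assume "(w, u) \<in> A\<^sup>*"
    then have to_u: "(v, u) \<in> A\<^sup>*" if "v \<in> V" for v using to_w[OF that] by (rule rtrancl_trans[rotated])
    have "strong V A" using AV to_u from_u by (rule strong_if_hub)
    then show False using \<open>\<not> strong V A\<close> by contradiction
  qed
  then have "(u, w) \<in> A" and "(w, u) \<notin> A"
    using tournament_arc_if_not_reachable[OF T \<open>u \<in> V\<close> \<open>w \<in> V\<close>] by auto
  have "invert A {u, w} = insert (w, u) (A - {(u, w)})"
    using \<open>(u, w) \<in> A\<close> \<open>(w, u) \<notin> A\<close> loopless loopless by (rule invert_doubleton)
  moreover have "strong V (insert (w, u) (A - {(u, w)}))"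
    using AV \<open>u \<in> V\<close> \<open>w \<in> V\<close> \<open>3 \<le> card V\<close>
      to_w_avoiding[OF \<open>(w, u) \<notin> A\<^sup>*\<close>] from_u_avoiding[OF \<open>(w, u) \<notin> A\<^sup>*\<close>]
    by (rule strong_after_reversing_arc)
  ultimately show thesis using that \<open>u \<in> V\<close> \<open>w \<in> V\<close> by simp
qed

lemma Least_inversions_eq_0:
  assumes "P A"
  shows "(LEAST p. \<exists>Xs. length Xs = p \<and> set Xs \<subseteq> Pow V \<and> P (invert_seq A Xs)) = 0"
  by (rule Least_eq_0) (use assms in \<open>auto simp: invert_seq_def intro!: exI[of _ "[]"]\<close>)

lemma Least_inversions_eq_1:
  assumes "\<not> P A" and "X \<subseteq> V" and "P (invert A X)"
  shows "(LEAST p. \<exists>Xs. length Xs = p \<and> set Xs \<subseteq> Pow V \<and> P (invert_seq A Xs)) = 1"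
proof (rule Least_equality)
  show "\<exists>Xs. length Xs = 1 \<and> set Xs \<subseteq> Pow V \<and> P (invert_seq A Xs)"
    using assms(2,3) by (auto simp: invert_seq_def intro!: exI[of _ "[X]"])
  show "1 \<le> p" if "\<exists>Xs. length Xs = p \<and> set Xs \<subseteq> Pow V \<and> P (invert_seq A Xs)" for p
    using that assms(1) by (auto simp: invert_seq_def Suc_le_eq)
qed

lemma tournament_sinv_1:
  assumes T: "tournament V A" and "3 \<le> card V"
  shows "sinv 1 V A = (if strong V A then 0 else 1)"
    and "sinv' 1 V A = (if strong V A then 0 else 1)"
proof -
  have fin: "finite V" and AV: "A \<subseteq> V \<times> V" using T unfolding tournament_def by auto
  have "2 \<le> card V" using \<open>3 \<le> card V\<close> by simp
  have iff_strong: "k_strong 1 V B \<longleftrightarrow> strong V B" "arc_strong 1 V B \<longleftrightarrow> strong V B"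
    if "B \<subseteq> V \<times> V" for B
    using k_strong_1_iff[OF fin] strong_iff_arc_strong_1[OF fin that] \<open>2 \<le> card V\<close> by auto
  have "sinv 1 V A = (if strong V A then 0 else 1) \<and> sinv' 1 V A = (if strong V A then 0 else 1)"
  proof (cases "strong V A")
    case True
    then have "k_strong 1 V A" and "arc_strong 1 V A" using iff_strong[OF AV] by simp_all
    then have "sinv 1 V A = 0" and "sinv' 1 V A = 0"
      unfolding sinv_def sinv'_def by (blast intro: Least_inversions_eq_0)+
    with True show ?thesis by simp
  next
    case False
    obtain u w where "{u, w} \<subseteq> V" and "strong V (invert A {u, w})"
      using tournament_strong_after_inverting_pair[OF T \<open>3 \<le> card V\<close> False] by blast
    moreover have "\<not> k_strong 1 V A" and "\<not> arc_strong 1 V A"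
      using False iff_strong[OF AV] by simp_all
    moreover have "k_strong 1 V (invert A {u, w})" and "arc_strong 1 V (invert A {u, w})"
      using \<open>strong V (invert A {u, w})\<close> iff_strong[OF invert_subset_Times[OF AV]] by simp_all
    ultimately have "sinv 1 V A = 1" and "sinv' 1 V A = 1"
      unfolding sinv_def sinv'_def by (blast intro: Least_inversions_eq_1)+
    with False show ?thesis by simp
  qed
  then show "sinv 1 V A = (if strong V A then 0 else 1)"
    and "sinv' 1 V A = (if strong V A then 0 else 1)" by simp_all
qed

lemma transitive_tournament_not_strong:
  fixes n :: nat
  assumes "2 \<le> n"
  shows "\<not> strong {0..<n} {(i, j). i < j \<and> j < n}"
proof
  let ?A = "{(i, j). i < j \<and> j < n}"
  have "?A \<subseteq> {0..<n} \<times> {0..<n}" by auto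
  moreover assume "strong {0..<n} ?A"
  ultimately have "\<forall>i\<in>{0..<n}. \<forall>j\<in>{0..<n}. (i, j) \<in> ?A\<^sup>*" by (simp add: strong_iff_reachable)
  then have "(1, 0) \<in> ?A\<^sup>*" using assms by simp
  then have "0 \<in> ?A\<^sup>* `` {1..}" by (rule ImageI) simp
  moreover have "?A\<^sup>* `` {1..} = {1..}" by (rule Image_closed_trancl) auto
  ultimately show False by simp
qed

lemma m_k_1:
  assumes "3 \<le> n"
  shows "m_k 1 n = 1" and "m'_k 1 n = 1"
proof -
  let ?T = "{(i, j). i < j \<and> j < n}"
  have T: "tournament {0..<n} ?T" unfolding tournament_def by auto
  have "3 \<le> card {0..<n}" using assms by simp
  note sinv_eq = tournament_sinv_1[OF _ this]
  have Max_eq_1: "Max S = 1" if "S \<subseteq> {0, 1}" and "1 \<in> S" for S :: "nat set"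
    using that by (intro Max_eqI) (auto intro: finite_subset)
  have in_0_1: "sinv 1 {0..<n} A \<in> {0, 1} \<and> sinv' 1 {0..<n} A \<in> {0, 1}" if "tournament {0..<n} A" for A
    using sinv_eq[OF that] by simp
  have "{sinv 1 {0..<n} A | A. tournament {0..<n} A} \<subseteq> {0, 1}"
    and "{sinv' 1 {0..<n} A | A. tournament {0..<n} A} \<subseteq> {0, 1}" by (auto dest: in_0_1)
  moreover have "sinv 1 {0..<n} ?T = 1" and "sinv' 1 {0..<n} ?T = 1"
    using sinv_eq[OF T] transitive_tournament_not_strong assms by simp_all
  then have "1 \<in> {sinv 1 {0..<n} A | A. tournament {0..<n} A}"
    and "1 \<in> {sinv' 1 {0..<n} A | A. tournament {0..<n} A}"
    using T by (metis (mono_tags, lifting) mem_Collect_eq)+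
  ultimately show "m_k 1 n = 1" and "m'_k 1 n = 1" unfolding m_k_def m'_k_def by (simp_all add: Max_eq_1)
qed

lemma M_k_1:
  shows "M_k 1 = 1" and "M'_k 1 = 1"
proof -
  let ?N = "{n::nat. 2 * 1 + 1 \<le> n}"
  have "?N \<noteq> {}" by auto
  moreover have "enat (m_k 1 n) = 1" and "enat (m'_k 1 n) = 1" if "n \<in> ?N" for n
    using m_k_1[of n] that by (simp_all add: one_enat_def)
  ultimately show "M_k 1 = 1" and "M'_k 1 = 1" unfolding M_k_def M'_k_def by simp_all
qed

theorem proposition5p1:
  fixes V :: "'a set" and A :: "('a \<times> 'a) set"
  assumes "tournament V A" and "card V \<ge> 3"
  shows "(strong V A \<longrightarrow> sinv 1 V A = 0 \<and> sinv' 1 V A = 0)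
       \<and> (\<not> strong V A \<longrightarrow> sinv 1 V A = 1 \<and> sinv' 1 V A = 1)
       \<and> (\<forall>n\<ge>3. m_k 1 n = 1 \<and> m'_k 1 n = 1)
       \<and> M_k 1 = 1 \<and> M'_k 1 = 1"
  using tournament_sinv_1[OF assms] m_k_1 M_k_1 by simp

end
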